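(* For every $n\ge1$, the map $e\mapsto d(e)$ is a bijection from $\mathbf{I}_n(021)$ onto $\mathcal{A}_n$, and for every $e\in\mathbf{I}_n(021)$, $$(\mathrm{dist},\mathrm{asc},\mathrm{zero},\mathrm{ema})(e)=(\mathrm{turn},\mathrm{segment},\mathrm{red},\mathrm{return})(d(e)).$$
   Context: $\mathbf{I}_n=\{(e_1,\dots,e_n): 0\le e_i\le i-1\}$; $\mathbf I_n(021)$ is the set of $e\in\mathbf I_n$ containing no indices $i<j<k$ with $e_i<e_k<e_j$ (equivalently, whose positive entries are weakly increasing). For $e\in\mathbf I_n$: $\mathrm{dist}(e)$ is the number of distinct positive values among the entries; $\mathrm{asc}(e)=|\{i\in[n-1]:e_i<e_{i+1}\}|$; $\mathrm{zero}(e)=|\{i:e_i=0\}|$; $\mathrm{ema}(e)=|\{i:e_i=i-1\}|$. A two-colored Dyck path of length $n$ is a lattice path from $(0,0)$ to $(n,n)$ with unit east and north steps never going above $y=x$, each east step colored black or red; it is encoded by $D=d_1\cdots d_n$ where $d_i$ (the height of the $i$-th east step) is the number of north steps before it, so $0\le d_1\le\dots\le d_n$, $d_i\le i-1$, together with the colors. The outline of $e\in\mathbf I_n(021)$ is the two-colored Dyck path $d(e)$ with $d_i=e_i$ and step $i$ black if $e_i\ne0$, and $d_i=\max\{e_1,\dots,e_i\}$ and step $i$ red if $e_i=0$. $\mathcal{A}_n$ is the set of two-colored Dyck paths of length $n$ such that (c-1) all east steps of height $0$ are red and (c-2) the first east step of each positive height is black. For a two-colored Dyck path $D$: $\mathrm{turn}(D)$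 is the number of east steps immediately followed by a north step, minus $1$ (equivalently $|\{i\in[n-1]: d_i<d_{i+1}\}|$); $\mathrm{segment}(D)$ is the number of maximal runs of consecutive east steps (consecutive indices) that are all black and have the same height; $\mathrm{red}(D)$ is the number of red east steps; $\mathrm{return}(D)$ is the number of lattice points $(i,i)$, $1\le i\le n$, on $D$ (equivalently $|\{i\in[n]:d_i=i-1\}|$). *)

theory Defs
  imports Main
begin

(* Sequences of length n are lists; list position i (0-based) corresponds to
   the paper's index i+1. Hence the constraint 0 <= e_i <= i-1 becomes e!i <= i. *)

definition inv_seqs :: "nat \<Rightarrow> nat list set" where
  "inv_seqs n = {e. length e = n \<and> (\<forall>i<n. e ! i \<le> i)}"

definition avoids021 :: "nat list \<Rightarrow> bool" where
  "avoids021 e \<longleftrightarrow> \<not> (\<exists>i j k. i < j \<and> j < k \<and> k < length e \<and> e ! i < e ! k \<and> e ! k < e ! j)"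

definition I021 :: "nat \<Rightarrow> nat list set" where
  "I021 n = {e \<in> inv_seqs n. avoids021 e}"

definition dist :: "nat list \<Rightarrow> nat" where
  "dist e = card {v \<in> set e. v > 0}"

definition asc :: "nat list \<Rightarrow> nat" where
  "asc e = card {i. i + 1 < length e \<and> e ! i < e ! (i + 1)}"

definition zero :: "nat list \<Rightarrow> nat" where
  "zero e = card {i. i < length e \<and> e ! i = 0}"

definition ema :: "nat list \<Rightarrow> nat" where
  "ema e = card {i. i < length e \<and> e ! i = i}"

(* Two-colored Dyck paths: (heights d, colours c); c ! i = True means step i is red,
   False means black. *)
type_synonym cdyck = "nat list \<times> bool list"

definition colored_dyck :: "nat \<Rightarrow> cdyck set" where
  "colored_dyck n = {(d, c). length d = n \<and> length c = n \<and> sorted d \<and> (\<forall>i<n. d ! i \<le> i)}"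

(* condition (c-1): height-0 steps are red;
   condition (c-2): the first east step of each positive height is black *)
definition A_paths :: "nat \<Rightarrow> cdyck set" where
  "A_paths n = {(d, c) \<in> colored_dyck n.
      (\<forall>i<n. d ! i = 0 \<longrightarrow> c ! i) \<and>
      (\<forall>i<n. d ! i > 0 \<and> (\<forall>j<i. d ! j \<noteq> d ! i) \<longrightarrow> \<not> c ! i)}"

definition outline :: "nat list \<Rightarrow> cdyck" where
  "outline e = (map (\<lambda>i. if e ! i \<noteq> 0 then e ! i else Max (set (take (i + 1) e))) [0..<length e],
                map (\<lambda>i. e ! i = 0) [0..<length e])"

definition turn :: "cdyck \<Rightarrow> nat" where
  "turn D = card {i. i + 1 < length (fst D) \<and> fst D ! i < fst D ! (i + 1)}"

(* number of maximal runs of consecutive black steps of equal height: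
   count black steps that start such a run *)
definition segment :: "cdyck \<Rightarrow> nat" where
  "segment D = (let d = fst D; c = snd D in
     card {i. i < length d \<and> \<not> c ! i \<and>
              (i = 0 \<or> c ! (i - 1) \<or> d ! (i - 1) \<noteq> d ! i)})"

definition red :: "cdyck \<Rightarrow> nat" where
  "red D = card {i. i < length (snd D) \<and> snd D ! i}"

definition return :: "cdyck \<Rightarrow> nat" where
  "return D = card {i. i < length (fst D) \<and> fst D ! i = i}"

end

theory Submission
  imports Defs
begin

text \<open>The positive entries of a 021-avoiding inversion sequence are weakly increasing, so the
height of the outline at step \<open>i\<close> is the prefix maximum \<open>max(e\<^sub>1,\<dots>,e\<^sub>i)\<close>, and it equals \<open>e\<^sub>i\<close>
whenever \<open>e\<^sub>i > 0\<close>. The inverse map keeps the black heights and replaces red steps by \<open>0\<close>;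
condition (c-2) guarantees that every positive height is attained by a black step before or at
the current one, so the prefix maxima of the reconstructed sequence recover the path. The
statistics then correspond one by one: zeros are red steps, records \<open>e\<^sub>i = i - 1\<close> are returns,
an ascent of \<open>e\<close> is the start of a new black run, and every distinct positive value is
reached by exactly one strict ascent of the prefix maximum.\<close>

definition prefix_max :: "nat list \<Rightarrow> nat \<Rightarrow> nat" where
  "prefix_max e i = Max ((!) e ` {..i})"

lemma nth_le_prefix_max: "j \<le> i \<Longrightarrow> e ! j \<le> prefix_max e i"
  unfolding prefix_max_def by (rule Max_ge) auto

lemma prefix_max_attained: "\<exists>j\<le>i. prefix_max e i = e ! j"
proof -
  have "prefix_max e i \<in> (!) e ` {..i}"
    unfolding prefix_max_def by (rule Max_in) auto
  then show ?thesis by auto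
qed

lemma prefix_max_mono: "mono (prefix_max e)"
  by (rule monoI) (metis prefix_max_attained nth_le_prefix_max le_trans)

lemma prefix_max_less_attained_earlier:
  assumes "e ! i < prefix_max e i"
  shows "\<exists>j<i. prefix_max e j = prefix_max e i"
proof -
  obtain j where j: "j \<le> i" "prefix_max e i = e ! j"
    using prefix_max_attained by blast
  with assms have "j < i" by (metis le_neq_implies_less less_irrefl)
  moreover have "prefix_max e j = prefix_max e i"
    using j nth_le_prefix_max[of j j e] monoD[OF prefix_max_mono[of e] \<open>j \<le> i\<close>]
    by (simp add: antisym)
  ultimately show ?thesis by blast
qed

lemma prefix_max_le_index:
  assumes "e \<in> inv_seqs n" "i < n"
  shows "prefix_max e i \<le> i"
proof -
  obtain j where "j \<le> i" "prefix_max e i = e ! j"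
    using prefix_max_attained by blast
  moreover have "e ! j \<le> j"
    using assms \<open>j \<le> i\<close> by (simp add: inv_seqs_def)
  ultimately show ?thesis by simp
qed

lemma prefix_max_eq_index_iff:
  assumes "e \<in> inv_seqs n" "i < n"
  shows "prefix_max e i = i \<longleftrightarrow> e ! i = i"
proof
  assume "prefix_max e i = i"
  moreover obtain j where "j \<le> i" "prefix_max e i = e ! j"
    using prefix_max_attained by blast
  moreover have "e ! j \<le> j"
    using assms \<open>j \<le> i\<close> by (simp add: inv_seqs_def)
  ultimately show "e ! i = i" by (metis antisym)
next
  assume "e ! i = i"
  then show "prefix_max e i = i"
    using nth_le_prefix_max[of i i e] prefix_max_le_index[OF assms] by simp
qed

lemma I021_inv_seqs: "e \<in> I021 n \<Longrightarrow> e \<in> inv_seqs n"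
  by (simp add: I021_def)

lemma I021_length: "e \<in> I021 n \<Longrightarrow> length e = n"
  by (simp add: I021_def inv_seqs_def)

lemma I021_nth_0: "e \<in> I021 n \<Longrightarrow> 0 < n \<Longrightarrow> e ! 0 = 0"
  by (force simp: I021_def inv_seqs_def)

lemma I021_positive_mono:
  assumes "e \<in> I021 n" "j < k" "k < n" "0 < e ! j" "0 < e ! k"
  shows "e ! j \<le> e ! k"
proof (rule ccontr)
  assume "\<not> e ! j \<le> e ! k"
  moreover have "0 < j"
    using assms I021_nth_0[OF assms(1)] by (cases j) auto
  ultimately have "\<exists>i j k. i < j \<and> j < k \<and> k < length e \<and> e ! i < e ! k \<and> e ! k < e ! j"
    using assms I021_nth_0[OF assms(1)] I021_length[OF assms(1)]
    by (intro exI[of _ 0] exI[of _ j] exI[of _ k]) auto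
  with assms(1) show False unfolding I021_def avoids021_def by blast
qed

lemma prefix_max_I021:
  assumes "e \<in> I021 n" "i < n" "e ! i \<noteq> 0"
  shows "prefix_max e i = e ! i"
proof -
  obtain j where j: "j \<le> i" "prefix_max e i = e ! j"
    using prefix_max_attained by blast
  have "e ! j \<le> e ! i"
    using I021_positive_mono[OF assms(1), of j i] j assms by (cases "j = i \<or> e ! j = 0") auto
  with j nth_le_prefix_max[of i i e] show ?thesis by simp
qed

lemma outline_eq:
  assumes "e \<in> I021 n"
  shows "outline e = (map (prefix_max e) [0..<n], map (\<lambda>i. e ! i = 0) [0..<n])"
proof -
  have len: "length e = n" using I021_length[OF assms] .
  have "Max (set (take (Suc i) e)) = prefix_max e i" if "i < n" for i
  proof -
    have "set (take (Suc i) e) = (!) e ` {..<Suc i}"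
      using nth_image[of "Suc i" e] that len by (simp add: atLeast0LessThan)
    then show ?thesis by (simp add: prefix_max_def lessThan_Suc_atMost)
  qed
  then show ?thesis
    unfolding outline_def len using prefix_max_I021[OF assms] by (auto intro!: map_cong)
qed

lemma outline_in_A_paths:
  assumes e: "e \<in> I021 n"
  shows "outline e \<in> A_paths n"
proof -
  have "sorted (map (prefix_max e) [0..<n])"
    using monoD[OF prefix_max_mono] by (auto simp: sorted_iff_nth_mono)
  moreover have "\<forall>i<n. prefix_max e i \<le> i"
    using prefix_max_le_index[OF I021_inv_seqs[OF e]] by blast
  moreover have "\<forall>i<n. prefix_max e i = 0 \<longrightarrow> e ! i = 0"
    using prefix_max_I021[OF e] by force
  moreover have "\<forall>i<n. 0 < prefix_max e i \<and> (\<forall>j<i. prefix_max e j \<noteq> prefix_max e i)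
                   \<longrightarrow> e ! i \<noteq> 0"
  proof (intro allI impI notI)
    fix i assume "0 < prefix_max e i \<and> (\<forall>j<i. prefix_max e j \<noteq> prefix_max e i)" "e ! i = 0"
    then show False using prefix_max_less_attained_earlier[of e i] by auto
  qed
  ultimately show ?thesis
    unfolding outline_eq[OF e] A_paths_def colored_dyck_def by auto
qed

definition path_to_inv :: "cdyck \<Rightarrow> nat list" where
  "path_to_inv D = map (\<lambda>i. if snd D ! i then 0 else fst D ! i) [0..<length (fst D)]"

lemma path_to_inv_outline:
  assumes "e \<in> I021 n"
  shows "path_to_inv (outline e) = e"
  unfolding outline_eq[OF assms] path_to_inv_def
  by (rule nth_equalityI) (auto simp: I021_length[OF assms] prefix_max_I021[OF assms])

lemma path_to_inv_in_I021:
  assumes "(d, c) \<in> colored_dyck n"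
  shows "path_to_inv (d, c) \<in> I021 n"
proof -
  let ?e = "path_to_inv (d, c)"
  have len: "length d = n" and sorted: "sorted d" and below: "\<And>i. i < n \<Longrightarrow> d ! i \<le> i"
    using assms by (auto simp: colored_dyck_def)
  have nth: "\<And>i. i < n \<Longrightarrow> ?e ! i = (if c ! i then 0 else d ! i)"
    by (simp add: path_to_inv_def len)
  have "?e \<in> inv_seqs n"
    using nth below by (force simp: inv_seqs_def path_to_inv_def len)
  moreover have "avoids021 ?e"
    unfolding avoids021_def
  proof
    assume "\<exists>i j k. i < j \<and> j < k \<and> k < length ?e \<and> ?e ! i < ?e ! k \<and> ?e ! k < ?e ! j"
    then obtain i j k where ijk: "i < j" "j < k" "k < n" "?e ! i < ?e ! k" "?e ! k < ?e ! j"
      by (auto simp: path_to_inv_def len)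
    have "?e ! k = d ! k" using nth[of k] ijk by (auto split: if_splits)
    moreover have "d ! j \<le> d ! k" using sorted ijk len by (simp add: sorted_iff_nth_mono)
    moreover have "?e ! j \<le> d ! j" using nth[of j] ijk by simp
    ultimately show False using ijk by simp
  qed
  ultimately show ?thesis by (simp add: I021_def)
qed

text \<open>Condition (c-2) is what makes the height of a red step reachable: the first step at that
height is black and hence survives in \<open>path_to_inv\<close>.\<close>

lemma prefix_max_path_to_inv:
  assumes D: "(d, c) \<in> A_paths n" and i: "i < n"
  shows "prefix_max (path_to_inv (d, c)) i = d ! i"
proof -
  let ?e = "path_to_inv (d, c)"
  have len: "length d = n" and sorted: "sorted d"
    and first_black: "\<And>j. j < n \<Longrightarrow> 0 < d ! j \<Longrightarrow> \<forall>j'<j. d ! j' \<noteq> d ! j \<Longrightarrow> \<not> c ! j"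
    using D by (auto simp: A_paths_def colored_dyck_def)
  have nth: "\<And>j. j < n \<Longrightarrow> ?e ! j = (if c ! j then 0 else d ! j)"
    by (simp add: path_to_inv_def len)
  have "prefix_max ?e i \<le> d ! i"
  proof -
    obtain j where "j \<le> i" "prefix_max ?e i = ?e ! j"
      using prefix_max_attained by blast
    moreover have "d ! j \<le> d ! i"
      using sorted \<open>j \<le> i\<close> i len by (simp add: sorted_iff_nth_mono)
    ultimately show ?thesis using nth[of j] i by auto
  qed
  moreover have "d ! i \<le> prefix_max ?e i"
  proof (cases "d ! i = 0")
    case False
    define j where "j = (LEAST j. d ! j = d ! i)"
    have "d ! j = d ! i" "j \<le> i"
      unfolding j_def by (auto intro: LeastI Least_le)
    moreover have "\<forall>j'<j. d ! j' \<noteq> d ! j"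
      using not_less_Least \<open>d ! j = d ! i\<close> unfolding j_def by metis
    ultimately have "?e ! j = d ! i"
      using first_black[of j] nth[of j] i False by auto
    with \<open>j \<le> i\<close> show ?thesis by (metis nth_le_prefix_max)
  qed simp
  ultimately show ?thesis by simp
qed

lemma outline_path_to_inv:
  assumes D: "(d, c) \<in> A_paths n"
  shows "outline (path_to_inv (d, c)) = (d, c)"
proof -
  let ?e = "path_to_inv (d, c)"
  have in_I021: "?e \<in> I021 n"
    using D path_to_inv_in_I021 by (simp add: A_paths_def)
  have len: "length d = n" "length c = n"
    and black_positive: "\<And>i. i < n \<Longrightarrow> \<not> c ! i \<Longrightarrow> 0 < d ! i"
    using D by (auto simp: A_paths_def colored_dyck_def)
  have "map (prefix_max ?e) [0..<n] = d"
    by (rule nth_equalityI) (simp_all add: len prefix_max_path_to_inv[OF D])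
  moreover have "map (\<lambda>i. ?e ! i = 0) [0..<n] = c"
    by (rule nth_equalityI) (auto simp: len path_to_inv_def black_positive)
  ultimately show ?thesis
    by (simp add: outline_eq[OF in_I021])
qed

lemma bij_betw_outline: "bij_betw outline (I021 n) (A_paths n)"
proof (rule bij_betw_byWitness[where f' = path_to_inv])
  show "\<forall>e\<in>I021 n. path_to_inv (outline e) = e"
    using path_to_inv_outline by blast
  show "\<forall>D\<in>A_paths n. outline (path_to_inv D) = D"
    using outline_path_to_inv by fast
  show "outline ` I021 n \<subseteq> A_paths n"
    using outline_in_A_paths by blast
  show "path_to_inv ` A_paths n \<subseteq> I021 n"
    using path_to_inv_in_I021 by (fastforce simp: A_paths_def)
qed

lemma card_strict_ascents_mono:
  fixes f :: "nat \<Rightarrow> 'a::linorder"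
  assumes "mono f"
  shows "card {i. i < m \<and> f i < f (Suc i)} = card (f ` {..m} - {f 0})"
proof (induction m)
  case 0
  then show ?case by simp
next
  case (Suc m)
  have image: "f ` {..Suc m} - {f 0} = insert (f (Suc m)) (f ` {..m} - {f 0}) - {f 0}"
    by (auto simp: atMost_Suc)
  show ?case
  proof (cases "f m < f (Suc m)")
    case True
    have "{i. i < Suc m \<and> f i < f (Suc i)} = insert m {i. i < m \<and> f i < f (Suc i)}"
      using True by auto
    moreover have "f (Suc m) \<notin> f ` {..m}"
      using True monoD[OF assms] by (fastforce simp: not_less[symmetric])
    moreover have "f (Suc m) \<noteq> f 0"
      using True monoD[OF assms, of 0 m] by auto
    ultimately show ?thesis
      using Suc.IH image by simp
  next
    case False
    then have "f (Suc m) = f m"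
      using monoD[OF assms, of m "Suc m"] by simp
    moreover have "{i. i < Suc m \<and> f i < f (Suc i)} = {i. i < m \<and> f i < f (Suc i)}"
      using False less_Suc_eq by auto
    moreover have "insert (f m) (f ` {..m} - {f 0}) - {f 0} = f ` {..m} - {f 0}"
      by auto
    ultimately show ?thesis
      using Suc.IH image by simp
  qed
qed

lemma zero_eq_red:
  assumes "e \<in> I021 n"
  shows "zero e = red (outline e)"
  unfolding zero_def red_def outline_eq[OF assms]
  by (simp add: I021_length[OF assms] cong: conj_cong)

lemma ema_eq_return:
  assumes "e \<in> I021 n"
  shows "ema e = return (outline e)"
  unfolding ema_def return_def outline_eq[OF assms]
  using prefix_max_eq_index_iff[OF I021_inv_seqs[OF assms]]
  by (simp add: I021_length[OF assms] cong: conj_cong)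

lemma ascent_iff_segment_start:
  assumes "e \<in> I021 n" "Suc k < n"
  shows "e ! k < e ! Suc k \<longleftrightarrow>
         e ! Suc k \<noteq> 0 \<and> (e ! k = 0 \<or> prefix_max e k \<noteq> prefix_max e (Suc k))"
  using prefix_max_I021[OF assms(1), of k] prefix_max_I021[OF assms(1), of "Suc k"]
    I021_positive_mono[OF assms(1), of k "Suc k"] assms(2)
  by (cases "e ! k = 0") auto

lemma asc_eq_segment:
  assumes e: "e \<in> I021 n"
  shows "asc e = segment (outline e)"
proof -
  let ?starts = "{i. i < n \<and> e ! i \<noteq> 0 \<and>
                   (i = 0 \<or> e ! (i - 1) = 0 \<or> prefix_max e (i - 1) \<noteq> prefix_max e i)}"
  have "segment (outline e) = card ?starts"
    unfolding segment_def outline_eq[OF e] Let_def by (auto intro!: arg_cong[where f = card])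
  also have "?starts = Suc ` {k. Suc k < n \<and> e ! k < e ! Suc k}"
  proof (intro equalityI subsetI)
    fix i assume i: "i \<in> ?starts"
    then obtain k where "i = Suc k"
      using I021_nth_0[OF e] by (cases i) auto
    with i show "i \<in> Suc ` {k. Suc k < n \<and> e ! k < e ! Suc k}"
      using ascent_iff_segment_start[OF e, of k] by auto
  next
    fix i assume "i \<in> Suc ` {k. Suc k < n \<and> e ! k < e ! Suc k}"
    then obtain k where "i = Suc k" "Suc k < n" "e ! k < e ! Suc k" by auto
    then show "i \<in> ?starts"
      using ascent_iff_segment_start[OF e, of k] by auto
  qed
  also have "card \<dots> = asc e"
    by (simp add: card_image asc_def I021_length[OF e])
  finally show ?thesis ..
qed

lemma positive_values_I021:
  assumes e: "e \<in> I021 n"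
  shows "{v \<in> set e. 0 < v} = prefix_max e ` {..<n} - {prefix_max e 0}"
proof (cases "n = 0")
  case True
  then show ?thesis using I021_length[OF e] by simp
next
  case False
  have len: "length e = n" using I021_length[OF e] .
  have "prefix_max e 0 = 0"
    using prefix_max_attained[of 0 e] I021_nth_0[OF e] False by auto
  moreover have "prefix_max e i \<in> set e" if "i < n" for i
  proof -
    obtain j where "j \<le> i" "prefix_max e i = e ! j"
      using prefix_max_attained by blast
    with that len show ?thesis by simp
  qed
  moreover have "{v \<in> set e. 0 < v} \<subseteq> prefix_max e ` {..<n}"
    using prefix_max_I021[OF e] len by (force simp: in_set_conv_nth)
  ultimately show ?thesis by auto
qed

lemma dist_eq_turn:
  assumes e: "e \<in> I021 n"
  shows "dist e = turn (outline e)"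
proof (cases n)
  case 0
  then show ?thesis using I021_length[OF e] by (simp add: dist_def turn_def outline_def)
next
  case (Suc m)
  have "dist e = card (prefix_max e ` {..m} - {prefix_max e 0})"
    unfolding dist_def positive_values_I021[OF e] Suc lessThan_Suc_atMost ..
  also have "\<dots> = card {i. i < m \<and> prefix_max e i < prefix_max e (Suc i)}"
    using card_strict_ascents_mono[OF prefix_max_mono] by simp
  also have "\<dots> = turn (outline e)"
    unfolding turn_def outline_eq[OF e] by (simp add: Suc del: upt_Suc cong: conj_cong)
  finally show ?thesis .
qed

theorem lemma4p2:
  fixes n :: nat
  assumes "n \<ge> 1"
  shows "bij_betw outline (I021 n) (A_paths n) \<and>
         (\<forall>e \<in> I021 n. (dist e, asc e, zero e, ema e) =
             (turn (outline e), segment (outline e), red (outline e), return (outline e)))"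
  using bij_betw_outline dist_eq_turn asc_eq_segment zero_eq_red ema_eq_return by simp

end
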